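(* Consider the random-field Ising model: $E=\{-1,+1\}$, $E'=\{h_1,\dots,h_L\}\subset\mathbb R$ finite with $L\ge 2$, $\alpha[h](\sigma)=\frac{e^{h\sigma}}{2\cosh h}$ for $h\in E'$, $\sigma\in E$, $\pi\in\mathcal P(E')$ with $\pi(h)>0$ for all $h\in E'$, and $F(\nu)=G(\nu(+1)-\nu(-1))$ where $G:[-1,1]\to\mathbb R$ is twice continuously differentiable with $G'$ injective. Then the non-degeneracy condition 2) holds automatically: any two distinct minimizers $\hat\nu\neq\hat\nu'$ of $\Phi[\pi]$ on $\mathcal P(E)^{E'}$ have distinct stability vectors $B_{\hat\nu}\neq B_{\hat\nu'}$.
   Context: Free energy: $\Phi[\pi](\hat\nu)=F(\sum_h\pi(h)\hat\nu(h))+\sum_h\pi(h)S(\hat\nu(h)|\alpha[h])$ for $\hat\nu=(\hat\nu(h))_{h\in E'}\in\mathcal P(E)^{E'}$, $S(p|q)=\sum_a p(a)\log(p(a)/q(a))$. Write $\pi\cdot\hat\nu=\sum_h\pi(h)\hat\nu(h)$. For a minimizer $\hat\nu$, the stability vector $B_{\hat\nu}\in T\mathcal P(E')=\{x\in\mathbb R^{E'}:\sum_hx(h)=0\}$ is the vector with $\langle x,B_{\hat\nu}\rangle=-\big(dF_{\pi\cdot\hat\nu}(\sum_hx(h)\hat\nu(h))+\sum_hx(h)S(\hat\nu(h)|\alpha[h])\big)$ for all $x\in T\mathcal P(E')$, where $dF_\nu$ is the differential of $F$ on the tangent space $\{y\in\mathbb R^E:\sum y=0\}$ of the simplex $\mathcal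 P(E)$. *)

theory Defs
  imports "HOL-Analysis.Analysis"
begin

definition spins :: "real set" where
  "spins = {-1, 1}"

definition is_prob :: "'a set \<Rightarrow> ('a \<Rightarrow> real) \<Rightarrow> bool" where
  "is_prob A p \<longleftrightarrow> (\<forall>a\<in>A. 0 \<le> p a) \<and> sum p A = 1"

definition alpha :: "real \<Rightarrow> real \<Rightarrow> real" where
  "alpha h \<sigma> = exp (h * \<sigma>) / (2 * cosh h)"

text \<open>Relative entropy S(p|q) = sum_a p(a) log(p(a)/q(a)) over E (0 log 0 = 0).\<close>
definition relent :: "(real \<Rightarrow> real) \<Rightarrow> (real \<Rightarrow> real) \<Rightarrow> real" where
  "relent p q = (\<Sum>a\<in>spins. p a * ln (p a / q a))"

definition mix :: "real set \<Rightarrow> (real \<Rightarrow> real) \<Rightarrow> (real \<Rightarrow> real \<Rightarrow> real) \<Rightarrow> real \<Rightarrow> real" where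
  "mix E' w \<nu> = (\<lambda>a. \<Sum>h\<in>E'. w h * \<nu> h a)"

definition Fising :: "(real \<Rightarrow> real) \<Rightarrow> (real \<Rightarrow> real) \<Rightarrow> real" where
  "Fising G \<nu> = G (\<nu> 1 - \<nu> (-1))"

text \<open>Differential of F at nu applied to a tangent vector y (sum y = 0), where G' is
  the derivative of G: dF_nu(y) = G'(nu(+1)-nu(-1)) (y(+1)-y(-1)).\<close>
definition dFising :: "(real \<Rightarrow> real) \<Rightarrow> (real \<Rightarrow> real) \<Rightarrow> (real \<Rightarrow> real) \<Rightarrow> real" where
  "dFising G' \<nu> y = G' (\<nu> 1 - \<nu> (-1)) * (y 1 - y (-1))"

definition Phi :: "(real \<Rightarrow> real) \<Rightarrow> real set \<Rightarrow> (real \<Rightarrow> real) \<Rightarrow> (real \<Rightarrow> real \<Rightarrow> real) \<Rightarrow> real" where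
  "Phi G E' w \<nu> = Fising G (mix E' w \<nu>) + (\<Sum>h\<in>E'. w h * relent (\<nu> h) (alpha h))"

definition admissible :: "real set \<Rightarrow> (real \<Rightarrow> real \<Rightarrow> real) \<Rightarrow> bool" where
  "admissible E' \<nu> \<longleftrightarrow> (\<forall>h\<in>E'. is_prob spins (\<nu> h))"

definition is_minimizer :: "(real \<Rightarrow> real) \<Rightarrow> real set \<Rightarrow> (real \<Rightarrow> real) \<Rightarrow> (real \<Rightarrow> real \<Rightarrow> real) \<Rightarrow> bool" where
  "is_minimizer G E' w \<nu> \<longleftrightarrow> admissible E' \<nu> \<and>
     (\<forall>\<mu>. admissible E' \<mu> \<longrightarrow> Phi G E' w \<nu> \<le> Phi G E' w \<mu>)"

definition is_stability_vector ::
  "(real \<Rightarrow> real) \<Rightarrow> real set \<Rightarrow> (real \<Rightarrow> real) \<Rightarrow> (real \<Rightarrow> real \<Rightarrow> real) \<Rightarrow> (real \<Rightarrow> real) \<Rightarrow> bool" where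
  "is_stability_vector G' E' w \<nu> B \<longleftrightarrow> sum B E' = 0 \<and>
     (\<forall>x. sum x E' = 0 \<longrightarrow>
        (\<Sum>h\<in>E'. x h * B h) =
          - (dFising G' (mix E' w \<nu>) (\<lambda>a. \<Sum>h\<in>E'. x h * \<nu> h a)
             + (\<Sum>h\<in>E'. x h * relent (\<nu> h) (alpha h))))"

end

theory Submission
  imports Defs
begin

text \<open>At a minimiser every site law is interior: the binary entropy has infinite slope at the
  boundary of the simplex, while G is Lipschitz. The first-order condition then makes the law at
  field h the tilted law \<open>\<alpha>[h - g]\<close>, where g is G' at the magnetisation, and the site costs that
  enter the stability vector become \<open>ln cosh h - ln cosh (h - g)\<close>. Hence B determines
  \<open>ln cosh (h1 - g) - ln cosh (h2 - g)\<close>, which is strictly monotone in g for \<open>h1 \<noteq> h2\<close>: equal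
  stability vectors force equal g and therefore equal minimisers.\<close>

lemma lipschitz_on_of_continuous_derivative:
  fixes f f' :: "real \<Rightarrow> real"
  assumes "convex S" "compact S"
    and f': "\<And>x. x \<in> S \<Longrightarrow> (f has_real_derivative f' x) (at x within S)"
    and "continuous_on S f'"
  obtains L where "L-lipschitz_on S f"
proof -
  obtain B where B: "\<And>x. x \<in> S \<Longrightarrow> norm (f' x) \<le> B"
    using compact_imp_bounded[OF compact_continuous_image[OF assms(4,2)]]
    by (auto simp: bounded_iff)
  have "\<bar>B\<bar>-lipschitz_on S f"
  proof (rule lipschitz_onI)
    fix x y assume "x \<in> S" "y \<in> S"
    then have "norm (f x - f y) \<le> \<bar>B\<bar> * norm (x - y)"
      using B by (intro field_differentiable_bound[OF \<open>convex S\<close> f']) force+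
    then show "dist (f x) (f y) \<le> \<bar>B\<bar> * dist x y" by (simp add: dist_norm)
  qed simp
  then show thesis by (rule that)
qed

definition binary_relent :: "real \<Rightarrow> real \<Rightarrow> real \<Rightarrow> real" where
  "binary_relent a b p = p * ln (p / a) + (1 - p) * ln ((1 - p) / b)"

lemma binary_relent_swap: "binary_relent b a (1 - p) = binary_relent a b p"
  by (simp add: binary_relent_def)

lemma binary_relent_has_real_derivative:
  assumes "0 < p" "p < 1" "0 < a" "0 < b"
  shows "(binary_relent a b has_real_derivative ln (p / a) - ln ((1 - p) / b)) (at p)"
  unfolding binary_relent_def using assms by (auto intro!: derivative_eq_intros)

text \<open>Near p = 0 the entropy falls like p ln p, faster than any Lipschitz perturbation can rise.\<close>
lemma binary_relent_escapes_zero: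
  assumes "0 < w" "0 < a" "0 < b" and \<phi>: "L-lipschitz_on {0..1} \<phi>"
  shows "\<exists>p\<in>{0<..<1}. \<phi> p + w * binary_relent a b p < \<phi> 0 + w * binary_relent a b 0"
proof -
  define c where "c = ln a - ln b - 1 - L / w"
  define p where "p = min (1/2) (exp c)"
  have p: "0 < p" "p < 1" unfolding p_def by auto
  have "p \<le> exp c"
    unfolding p_def by simp
  then have "ln p \<le> c"
    using p by (metis ln_exp ln_le_cancel_iff exp_gt_zero)
  then have "w * (ln p - ln a + ln b) \<le> w * (- 1 - L / w)"
    using \<open>0 < w\<close> unfolding c_def by (intro mult_left_mono) auto
  also have "\<dots> = - w - L"
    using \<open>0 < w\<close> by (simp add: right_diff_distrib)
  finally have log: "L + w * (ln p - ln a + ln b) \<le> - w" by simp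
  have "\<phi> p - \<phi> 0 \<le> L * p"
    using lipschitz_onD[OF \<phi>, of p 0] p by (simp add: dist_real_def)
  moreover have "w * ((1 - p) * ln (1 - p)) \<le> 0"
    using p \<open>0 < w\<close> by (intro mult_nonneg_nonpos mult_nonneg_nonpos) auto
  moreover have "w * binary_relent a b p - w * binary_relent a b 0
      = p * (w * (ln p - ln a + ln b)) + w * ((1 - p) * ln (1 - p))"
    unfolding binary_relent_def using p assms by (simp add: ln_div algebra_simps)
  ultimately have "\<phi> p + w * binary_relent a b p - (\<phi> 0 + w * binary_relent a b 0)
      \<le> p * (L + w * (ln p - ln a + ln b))"
    unfolding distrib_left by (simp add: mult.commute[of L])
  also have "\<dots> \<le> p * (- w)"
    using log p by (intro mult_left_mono) auto
  also have "\<dots> < 0" using p \<open>0 < w\<close> by simp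
  finally show ?thesis using p by auto
qed

lemma binary_relent_min_interior:
  assumes "0 < w" "0 < a" "0 < b" and \<phi>: "L-lipschitz_on {0..1} \<phi>"
    and ps: "ps \<in> {0..1}"
    and min: "\<forall>p\<in>{0..1}. \<phi> ps + w * binary_relent a b ps \<le> \<phi> p + w * binary_relent a b p"
  shows "0 < ps" "ps < 1"
proof -
  show "0 < ps"
  proof (rule ccontr)
    assume "\<not> 0 < ps"
    with ps min have "\<forall>p\<in>{0..1}. \<phi> 0 + w * binary_relent a b 0 \<le> \<phi> p + w * binary_relent a b p"
      by auto
    moreover obtain p where "p \<in> {0<..<1}"
      "\<phi> p + w * binary_relent a b p < \<phi> 0 + w * binary_relent a b 0"
      using binary_relent_escapes_zero[OF assms(1-4)] by blast
    ultimately show False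
      by (meson atLeastAtMost_iff greaterThanLessThan_iff less_imp_le not_le)
  qed
  have "L-lipschitz_on {0..1} (\<lambda>p. \<phi> (1 - p))"
  proof (rule lipschitz_onI)
    fix x y :: real assume "x \<in> {0..1}" "y \<in> {0..1}"
    then show "dist (\<phi> (1 - x)) (\<phi> (1 - y)) \<le> L * dist x y"
      using lipschitz_onD[OF \<phi>, of "1 - x" "1 - y"] by (simp add: dist_real_def abs_minus_commute)
  qed (rule lipschitz_on_nonneg[OF \<phi>])
  from binary_relent_escapes_zero[OF assms(1,3,2) this]
  obtain p where "p \<in> {0<..<1}"
    "\<phi> (1 - p) + w * binary_relent a b (1 - p) < \<phi> 1 + w * binary_relent a b 1"
    by (metis binary_relent_swap diff_zero cancel_comm_monoid_add_class.diff_cancel)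
  then show "ps < 1"
    using ps min[rule_format, of "1 - p"] by (cases "ps = 1") auto
qed

lemma binary_relent_min_critical:
  assumes "0 < w" "0 < a" "0 < b" and \<phi>: "L-lipschitz_on {0..1} \<phi>"
    and \<phi>': "\<forall>p\<in>{0<..<1}. (\<phi> has_real_derivative \<phi>' p) (at p)"
    and ps: "ps \<in> {0..1}"
    and min: "\<forall>p\<in>{0..1}. \<phi> ps + w * binary_relent a b ps \<le> \<phi> p + w * binary_relent a b p"
  shows "\<phi>' ps + w * (ln (ps / a) - ln ((1 - ps) / b)) = 0"
proof -
  note interior = binary_relent_min_interior[OF assms(1-4) ps min]
  have "((\<lambda>p. \<phi> p + w * binary_relent a b p) has_real_derivative
      \<phi>' ps + w * (ln (ps / a) - ln ((1 - ps) / b))) (at ps)"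
    using interior \<phi>' assms(2,3)
    by (intro DERIV_add DERIV_cmult binary_relent_has_real_derivative) auto
  then show ?thesis
  proof (rule DERIV_local_min)
    show "0 < min ps (1 - ps)" using interior by simp
    show "\<forall>y. \<bar>ps - y\<bar> < min ps (1 - ps) \<longrightarrow>
        \<phi> ps + w * binary_relent a b ps \<le> \<phi> y + w * binary_relent a b y"
      using min by (auto simp: abs_less_iff)
  qed
qed

lemma is_prob_spins_iff: "is_prob spins q \<longleftrightarrow> 0 \<le> q 1 \<and> q 1 \<le> 1 \<and> q (-1) = 1 - q 1"
  unfolding is_prob_def spins_def by auto

lemma alpha_pos: "0 < alpha h \<sigma>"
  unfolding alpha_def by simp

lemma alpha_add: "alpha t 1 + alpha t (-1) = 1"
proof -
  have "2 * cosh t = exp t + exp (- t)" by (simp add: cosh_def)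
  then show ?thesis
    unfolding alpha_def add_divide_distrib[symmetric]
    using add_pos_pos[OF exp_gt_zero exp_gt_zero, of t "- t"] by simp
qed

lemma ln_alpha: "ln (alpha h \<sigma>) = h * \<sigma> - ln (2 * cosh h)"
  unfolding alpha_def by (simp add: ln_div)

lemma relent_alpha_alpha:
  "relent (alpha t) (alpha h) = (t - h) * (alpha t 1 - alpha t (-1)) + ln (cosh h) - ln (cosh t)"
proof -
  define c where "c = ln (cosh h) - ln (cosh t)"
  have log_ratio: "ln (alpha t \<sigma> / alpha h \<sigma>) = (t - h) * \<sigma> + c" for \<sigma>
    using alpha_pos[of t \<sigma>] alpha_pos[of h \<sigma>] unfolding c_def
    by (simp add: ln_div ln_alpha ln_mult algebra_simps)
  have "relent (alpha t) (alpha h) = alpha t 1 * ((t - h) * 1 + c) + alpha t (-1) * ((t - h) * (-1) + c)"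
    unfolding relent_def spins_def log_ratio by simp
  also have "\<dots> = (t - h) * (alpha t 1 - alpha t (-1)) + (alpha t 1 + alpha t (-1)) * c"
    by (simp add: algebra_simps)
  finally show ?thesis unfolding alpha_add c_def by simp
qed

lemma spin_law_of_log_odds:
  assumes "0 < p" "p < 1" "ln p - ln (1 - p) = 2 * t"
  shows "p = alpha t 1" "1 - p = alpha t (-1)"
proof -
  have "p = (1 - p) * exp (2 * t)"
    using assms by (metis exp_diff exp_ln diff_gt_0_iff_gt nonzero_eq_divide_eq exp_gt_zero
        mult.commute order_less_irrefl)
  then have "p * (1 + exp (2 * t)) = exp (2 * t)"
    by (simp add: algebra_simps)
  then have "p = exp (2 * t) / (1 + exp (2 * t))"
    using add_pos_pos[OF zero_less_one exp_gt_zero, of "2 * t"] by (simp add: eq_divide_eq)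
  also have "\<dots> = alpha t 1"
  proof -
    have "exp (2 * t) = exp t * exp t" by (simp add: exp_add[symmetric])
    moreover have "0 < 1 + exp t * exp t" by (simp add: add_pos_nonneg)
    ultimately show ?thesis
      unfolding alpha_def cosh_def exp_minus by (simp add: field_simps)
  qed
  finally show "p = alpha t 1" .
  then show "1 - p = alpha t (-1)" using alpha_add[of t] by simp
qed

definition magnetization :: "real set \<Rightarrow> (real \<Rightarrow> real) \<Rightarrow> (real \<Rightarrow> real \<Rightarrow> real) \<Rightarrow> real" where
  "magnetization E' w \<nu> = mix E' w \<nu> 1 - mix E' w \<nu> (-1)"

definition spin_law :: "real \<Rightarrow> real \<Rightarrow> real" where
  "spin_law p \<sigma> = (if \<sigma> = 1 then p else 1 - p)"

lemma magnetization_eq_sum: "magnetization E' w \<nu> = (\<Sum>h\<in>E'. w h * (\<nu> h 1 - \<nu> h (-1)))"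
  unfolding magnetization_def mix_def by (simp add: sum_subtractf right_diff_distrib)

lemma magnetization_mem:
  assumes "admissible E' \<nu>" "\<forall>h\<in>E'. 0 \<le> w h" "sum w E' = 1"
  shows "magnetization E' w \<nu> \<in> {-1..1}"
proof -
  have m: "-1 \<le> \<nu> h 1 - \<nu> h (-1)" "\<nu> h 1 - \<nu> h (-1) \<le> 1" if "h \<in> E'" for h
    using assms(1) that unfolding admissible_def is_prob_spins_iff by auto
  have "(\<Sum>h\<in>E'. w h * (-1)) \<le> magnetization E' w \<nu>"
    unfolding magnetization_eq_sum using assms(2) m by (intro sum_mono mult_left_mono) auto
  moreover have "magnetization E' w \<nu> \<le> (\<Sum>h\<in>E'. w h * 1)"
    unfolding magnetization_eq_sum using assms(2) m by (intro sum_mono mult_left_mono) auto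
  ultimately show ?thesis using assms(3) by (simp add: sum_negf)
qed

lemma Phi_magnetization_cong:
  assumes "\<forall>h\<in>E'. \<forall>\<sigma>\<in>spins. \<mu> h \<sigma> = \<nu> h \<sigma>"
  shows "Phi G E' w \<mu> = Phi G E' w \<nu>" "magnetization E' w \<mu> = magnetization E' w \<nu>"
proof -
  have "mix E' w \<mu> \<sigma> = mix E' w \<nu> \<sigma>" if "\<sigma> \<in> spins" for \<sigma>
    using assms that unfolding mix_def by (intro sum.cong) auto
  moreover have "relent (\<mu> h) (alpha h) = relent (\<nu> h) (alpha h)" if "h \<in> E'" for h
    using assms that unfolding relent_def by (intro sum.cong) auto
  ultimately show "Phi G E' w \<mu> = Phi G E' w \<nu>" "magnetization E' w \<mu> = magnetization E' w \<nu>"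
    unfolding Phi_def Fising_def magnetization_def spins_def by auto
qed

lemma single_site_profile:
  fixes \<nu> :: "real \<Rightarrow> real \<Rightarrow> real" and w :: "real \<Rightarrow> real"
  assumes "finite E'" "h0 \<in> E'"
  defines "K \<equiv> (\<Sum>h\<in>E'-{h0}. w h * (\<nu> h 1 - \<nu> h (-1))) - w h0"
    and "R \<equiv> (\<Sum>h\<in>E'-{h0}. w h * relent (\<nu> h) (alpha h))"
  shows "magnetization E' w (\<nu>(h0 := spin_law p)) = K + 2 * w h0 * p"
    "Phi G E' w (\<nu>(h0 := spin_law p))
       = G (K + 2 * w h0 * p) + w h0 * binary_relent (alpha h0 1) (alpha h0 (-1)) p + R"
proof -
  let ?\<mu> = "\<nu>(h0 := spin_law p)"
  show mag: "magnetization E' w ?\<mu> = K + 2 * w h0 * p"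
    unfolding magnetization_eq_sum K_def using assms(1,2)
    by (simp add: sum.remove spin_law_def algebra_simps)
  have "relent (spin_law p) (alpha h0) = binary_relent (alpha h0 1) (alpha h0 (-1)) p"
    unfolding relent_def binary_relent_def spins_def spin_law_def by simp
  then have "(\<Sum>h\<in>E'. w h * relent (?\<mu> h) (alpha h))
      = w h0 * binary_relent (alpha h0 1) (alpha h0 (-1)) p + R"
    unfolding R_def using assms(1,2) by (simp add: sum.remove)
  moreover have "Fising G (mix E' w ?\<mu>) = G (magnetization E' w ?\<mu>)"
    unfolding Fising_def magnetization_def ..
  ultimately show "Phi G E' w ?\<mu>
       = G (K + 2 * w h0 * p) + w h0 * binary_relent (alpha h0 1) (alpha h0 (-1)) p + R"
    unfolding Phi_def mag by simp
qed

lemma affine_lipschitz_on: "\<bar>c\<bar>-lipschitz_on S (\<lambda>p. K + c * p :: real)"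
  by (rule lipschitz_onI) (auto simp: dist_real_def abs_mult right_diff_distrib[symmetric])

lemma minimizer_site_critical:
  assumes fin: "finite E'" and wpos: "\<forall>h\<in>E'. 0 < w h" and wsum: "sum w E' = 1"
    and G: "L-lipschitz_on {-1..1} G" and G': "\<forall>x\<in>{-1<..<1}. (G has_real_derivative G' x) (at x)"
    and min: "is_minimizer G E' w \<nu>" and h0: "h0 \<in> E'"
  shows "0 < \<nu> h0 1" "\<nu> h0 1 < 1"
    "ln (\<nu> h0 1) - ln (1 - \<nu> h0 1) = 2 * (h0 - G' (magnetization E' w \<nu>))"
proof -
  define K where "K = (\<Sum>h\<in>E'-{h0}. w h * (\<nu> h 1 - \<nu> h (-1))) - w h0"
  define R where "R = (\<Sum>h\<in>E'-{h0}. w h * relent (\<nu> h) (alpha h))"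
  define \<phi> where "\<phi> p = G (K + 2 * w h0 * p)" for p
  let ?a = "alpha h0 1" and ?b = "alpha h0 (-1)" and ?ps = "\<nu> h0 1"
  note profile = single_site_profile[OF fin h0, where w=w and \<nu>=\<nu>, folded K_def R_def]
  have w0: "0 < w h0" using wpos h0 by blast
  have adm: "admissible E' \<nu>" using min unfolding is_minimizer_def by blast
  then have ps: "?ps \<in> {0..1}" and q: "\<nu> h0 (-1) = 1 - ?ps"
    using h0 unfolding admissible_def is_prob_spins_iff by auto
  have adm_upd: "admissible E' (\<nu>(h0 := spin_law p))" if "p \<in> {0..1}" for p
    using adm that unfolding admissible_def is_prob_spins_iff spin_law_def by auto
  have "\<forall>h\<in>E'. \<forall>\<sigma>\<in>spins. \<nu> h \<sigma> = (\<nu>(h0 := spin_law ?ps)) h \<sigma>"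
    using q unfolding spins_def spin_law_def by auto
  note \<nu>_eq = Phi_magnetization_cong[OF this]
  have range: "K + 2 * w h0 * p \<in> {-1..1}" if "p \<in> {0..1}" for p
  proof -
    have "\<forall>h\<in>E'. 0 \<le> w h" using wpos by (simp add: less_imp_le)
    then show ?thesis using magnetization_mem[OF adm_upd[OF that] _ wsum] profile(1) by simp
  qed
  have min_ps: "\<forall>p\<in>{0..1}. \<phi> ?ps + w h0 * binary_relent ?a ?b ?ps \<le> \<phi> p + w h0 * binary_relent ?a ?b p"
  proof
    fix p :: real assume "p \<in> {0..1}"
    then have "Phi G E' w (\<nu>(h0 := spin_law ?ps)) \<le> Phi G E' w (\<nu>(h0 := spin_law p))"
      using min adm_upd \<nu>_eq(1) unfolding is_minimizer_def by metis
    then show "\<phi> ?ps + w h0 * binary_relent ?a ?b ?ps \<le> \<phi> p + w h0 * binary_relent ?a ?b p"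
      unfolding profile \<phi>_def by simp
  qed
  have lip: "(L * \<bar>2 * w h0\<bar>)-lipschitz_on {0..1} \<phi>"
    unfolding \<phi>_def using range
    by (intro lipschitz_on_compose2[OF affine_lipschitz_on] lipschitz_on_subset[OF G]) auto
  have deriv: "\<forall>p\<in>{0<..<1}. (\<phi> has_real_derivative G' (K + 2 * w h0 * p) * (2 * w h0)) (at p)"
  proof
    fix p :: real assume "p \<in> {0<..<1}"
    moreover have "-1 \<le> K" "K + 2 * w h0 \<le> 1" using range[of 0] range[of 1] by auto
    moreover have "0 < w h0 * p" "w h0 * p < w h0"
      using \<open>p \<in> _\<close> w0 by (simp_all add: mult_less_cancel_left1)
    ultimately have "K + 2 * w h0 * p \<in> {-1<..<1}" by auto
    then show "(\<phi> has_real_derivative G' (K + 2 * w h0 * p) * (2 * w h0)) (at p)"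
      unfolding \<phi>_def using G' by (auto intro!: derivative_eq_intros DERIV_chain2[of G])
  qed
  have crit: "G' (K + 2 * w h0 * ?ps) * (2 * w h0)
      + w h0 * (ln (?ps / ?a) - ln ((1 - ?ps) / ?b)) = 0"
    by (rule binary_relent_min_critical[OF w0 alpha_pos alpha_pos lip deriv ps min_ps])
  show interior: "0 < ?ps" "?ps < 1"
    using binary_relent_min_interior[OF w0 alpha_pos alpha_pos lip ps min_ps] by auto
  have "magnetization E' w \<nu> = K + 2 * w h0 * ?ps"
    unfolding \<nu>_eq(2) profile(1) ..
  moreover have "w h0 * (2 * G' (K + 2 * w h0 * ?ps) + ln ?ps - ln (1 - ?ps) - 2 * h0) = 0"
    using crit interior alpha_pos[of h0 1] alpha_pos[of h0 "-1"]
    by (simp add: ln_div ln_alpha algebra_simps)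
  ultimately show "ln ?ps - ln (1 - ?ps) = 2 * (h0 - G' (magnetization E' w \<nu>))"
    using w0 by simp
qed

lemma minimizer_site_law:
  assumes "finite E'" "\<forall>h\<in>E'. 0 < w h" "sum w E' = 1"
    and "L-lipschitz_on {-1..1} G" "\<forall>x\<in>{-1<..<1}. (G has_real_derivative G' x) (at x)"
    and min: "is_minimizer G E' w \<nu>" and h: "h \<in> E'"
  shows "\<forall>\<sigma>\<in>spins. \<nu> h \<sigma> = alpha (h - G' (magnetization E' w \<nu>)) \<sigma>"
proof -
  note law = spin_law_of_log_odds[OF minimizer_site_critical[OF assms]]
  have "\<nu> h (-1) = 1 - \<nu> h 1"
    using min h unfolding is_minimizer_def admissible_def is_prob_spins_iff by blast
  with law show ?thesis unfolding spins_def by auto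
qed

lemma minimizer_site_cost:
  assumes "finite E'" "\<forall>h\<in>E'. 0 < w h" "sum w E' = 1"
    and "L-lipschitz_on {-1..1} G" "\<forall>x\<in>{-1<..<1}. (G has_real_derivative G' x) (at x)"
    and "is_minimizer G E' w \<nu>" and "h \<in> E'"
  defines "g \<equiv> G' (magnetization E' w \<nu>)"
  shows "g * (\<nu> h 1 - \<nu> h (-1)) + relent (\<nu> h) (alpha h) = ln (cosh h) - ln (cosh (h - g))"
proof -
  have law: "\<forall>\<sigma>\<in>spins. \<nu> h \<sigma> = alpha (h - g) \<sigma>"
    unfolding g_def by (rule minimizer_site_law[OF assms(1-7)])
  then have "relent (\<nu> h) (alpha h) = relent (alpha (h - g)) (alpha h)"
    unfolding relent_def by (intro sum.cong) auto
  with law show ?thesis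
    unfolding relent_alpha_alpha spins_def by (simp add: algebra_simps)
qed

lemma stability_vector_diff:
  assumes "finite E'" "h1 \<in> E'" "h2 \<in> E'" and B: "is_stability_vector G' E' w \<nu> B"
  defines "g \<equiv> G' (magnetization E' w \<nu>)"
  shows "B h1 - B h2 = (g * (\<nu> h2 1 - \<nu> h2 (-1)) + relent (\<nu> h2) (alpha h2))
                       - (g * (\<nu> h1 1 - \<nu> h1 (-1)) + relent (\<nu> h1) (alpha h1))"
proof -
  define x :: "real \<Rightarrow> real" where "x h = of_bool (h = h1) - of_bool (h = h2)" for h
  have pick: "(\<Sum>h\<in>E'. x h * f h) = f h1 - f h2" for f :: "real \<Rightarrow> real"
    using assms(1-3) unfolding x_def by (simp add: left_diff_distrib sum_subtractf)
  have "sum x E' = 0" using pick[of "\<lambda>_. 1"] by simp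
  with B have "(\<Sum>h\<in>E'. x h * B h) = - (dFising G' (mix E' w \<nu>) (\<lambda>a. \<Sum>h\<in>E'. x h * \<nu> h a)
      + (\<Sum>h\<in>E'. x h * relent (\<nu> h) (alpha h)))"
    unfolding is_stability_vector_def by blast
  then show ?thesis
    unfolding pick dFising_def g_def magnetization_def by (simp add: algebra_simps)
qed

lemma ln_cosh_shift_diff_inj:
  fixes h1 h2 g g' :: real
  assumes "h1 \<noteq> h2"
    and "ln (cosh (h1 - g)) - ln (cosh (h2 - g)) = ln (cosh (h1 - g')) - ln (cosh (h2 - g'))"
  shows "g = g'"
proof -
  have "ln (cosh (h1 - g) * cosh (h2 - g')) = ln (cosh (h1 - g') * cosh (h2 - g))"
    using assms(2) by (simp add: ln_mult)
  then have "cosh (h1 - g) * cosh (h2 - g') - cosh (h1 - g') * cosh (h2 - g) = 0"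
    by simp
  moreover have "cosh (h1 - g) * cosh (h2 - g') - cosh (h1 - g') * cosh (h2 - g)
      = sinh (h1 - h2) * sinh (g' - g)"
    by (simp add: cosh_diff sinh_diff algebra_simps)
  ultimately show ?thesis using assms(1) by simp
qed

lemma two_distinct_elements:
  assumes "2 \<le> card A"
  obtains a b where "a \<in> A" "b \<in> A" "a \<noteq> b"
proof -
  obtain a B where "A = insert a B" "a \<notin> B" "1 \<le> card B"
    using assms card_le_Suc_iff[of 1 A] by (auto simp: numeral_2_eq_2)
  moreover then obtain b where "b \<in> B" by fastforce
  ultimately show thesis using that by blast
qed

theorem mainTheorem6:
  fixes E' :: "real set" and w :: "real \<Rightarrow> real"
    and G G' G'' :: "real \<Rightarrow> real"
    and \<nu> \<nu>' :: "real \<Rightarrow> real \<Rightarrow> real" and B B' :: "real \<Rightarrow> real"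
  assumes fin: "finite E'" and L2: "card E' \<ge> 2"
    and wpos: "\<forall>h\<in>E'. w h > 0" and wsum: "sum w E' = 1"
    and G_deriv: "\<forall>x\<in>{-1..1}. (G has_real_derivative G' x) (at x within {-1..1})"
    and G'_deriv: "\<forall>x\<in>{-1..1}. (G' has_real_derivative G'' x) (at x within {-1..1})"
    and G''_cont: "continuous_on {-1..1} G''"
    and G'_inj: "inj_on G' {-1..1}"
    and min1: "is_minimizer G E' w \<nu>" and min2: "is_minimizer G E' w \<nu>'"
    and distinct: "\<exists>h\<in>E'. \<exists>\<sigma>\<in>spins. \<nu> h \<sigma> \<noteq> \<nu>' h \<sigma>"
    and B1: "is_stability_vector G' E' w \<nu> B"
    and B2: "is_stability_vector G' E' w \<nu>' B'"
  shows "\<exists>h\<in>E'. B h \<noteq> B' h"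
proof (rule ccontr)
  assume "\<not> (\<exists>h\<in>E'. B h \<noteq> B' h)"
  then have same_B: "B h = B' h" if "h \<in> E'" for h using that by blast
  obtain L where G_lip: "L-lipschitz_on {-1..1} G"
    using lipschitz_on_of_continuous_derivative[of "{-1..1}" G G'] G_deriv
      DERIV_continuous_on[of "{-1..1}" G' G''] G'_deriv by auto
  have G_interior: "\<forall>x\<in>{-1<..<1}. (G has_real_derivative G' x) (at x)"
  proof
    fix x :: real assume "x \<in> {-1<..<1}"
    then have "(G has_real_derivative G' x) (at x within {-1..1})" using G_deriv by auto
    with \<open>x \<in> _\<close> show "(G has_real_derivative G' x) (at x)" by (simp add: at_within_Icc_at)
  qed
  note law = minimizer_site_law[OF fin wpos wsum G_lip G_interior]
  note cost = minimizer_site_cost[OF fin wpos wsum G_lip G_interior]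
  obtain h1 h2 where h12: "h1 \<in> E'" "h2 \<in> E'" "h1 \<noteq> h2"
    using two_distinct_elements[OF L2] by blast
  define g g' where "g = G' (magnetization E' w \<nu>)" and "g' = G' (magnetization E' w \<nu>')"
  have "B h1 - B h2 = B' h1 - B' h2" using same_B h12 by simp
  then have "ln (cosh (h1 - g)) - ln (cosh (h2 - g)) = ln (cosh (h1 - g')) - ln (cosh (h2 - g'))"
    unfolding stability_vector_diff[OF fin h12(1,2) B1, folded g_def]
      stability_vector_diff[OF fin h12(1,2) B2, folded g'_def]
      cost[OF min1 h12(1), folded g_def] cost[OF min1 h12(2), folded g_def]
      cost[OF min2 h12(1), folded g'_def] cost[OF min2 h12(2), folded g'_def]
    by simp
  then have "g = g'" using ln_cosh_shift_diff_inj h12(3) by blast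
  then show False
    using distinct law[OF min1] law[OF min2] unfolding g_def g'_def by auto
qed

end
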